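(* For every integer $k\geq 2$, let $G_k$ be the graph obtained as follows: take two vertices $u_1,u_2$ joined by $2k$ parallel edges $e_1,\dots,e_{2k}$; subdivide each $e_i$ once by a new vertex $v_i$; and for every odd $i\in\{1,3,\dots,2k-1\}$ add $2k-2$ parallel edges between $v_i$ and $v_{i+1}$. Let $\mathcal O$ be the set of $k$ pairwise edge-disjoint $4$-cycles $u_1v_iu_2v_{i+1}u_1$ (using the subdivided edges), $i\in\{1,3,\dots,2k-1\}$. Then $G_k$ is a $2$-connected $2k$-regular graph, and if $t$ is a positive integer such that some $t$-factor of $G_k$ intersects every cycle of $\mathcal O$ in at least one edge, then $t \geq k$.
   Context: Graphs are finite and loopless but may have parallel edges. A cycle is a connected $2$-regular subgraph. A $t$-factor is a spanning $t$-regular subgraph. $2$-connected means connected with no cut-vertex. *)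

theory Defs
  imports Main
begin

text \<open>A multigraph is given by a vertex set V, an edge set E (edges are abstract
objects, so parallel edges are allowed) and an incidence map ends assigning to each
edge its set of two distinct endpoints (looplessness).\<close>

definition multigraph :: "'v set \<Rightarrow> 'e set \<Rightarrow> ('e \<Rightarrow> 'v set) \<Rightarrow> bool" where
  "multigraph V E ends \<longleftrightarrow> finite V \<and> finite E \<and>
     (\<forall>e\<in>E. ends e \<subseteq> V \<and> card (ends e) = 2)"

text \<open>Degree of v in the spanning subgraph with edge set F (loopless, so each
incident edge counts once).\<close>
definition mdegree :: "'e set \<Rightarrow> ('e \<Rightarrow> 'v set) \<Rightarrow> 'v \<Rightarrow> nat" where
  "mdegree F ends v = card {e\<in>F. v \<in> ends e}"

definition regular :: "'v set \<Rightarrow> 'e set \<Rightarrow> ('e \<Rightarrow> 'v set) \<Rightarrow> nat \<Rightarrow> bool" where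
  "regular V E ends d \<longleftrightarrow> (\<forall>v\<in>V. mdegree E ends v = d)"

definition is_factor :: "'v set \<Rightarrow> 'e set \<Rightarrow> ('e \<Rightarrow> 'v set) \<Rightarrow> nat \<Rightarrow> 'e set \<Rightarrow> bool" where
  "is_factor V E ends t F \<longleftrightarrow> F \<subseteq> E \<and> regular V F ends t"

definition adj_in :: "'e set \<Rightarrow> ('e \<Rightarrow> 'v set) \<Rightarrow> 'v set \<Rightarrow> 'v \<Rightarrow> 'v \<Rightarrow> bool" where
  "adj_in E ends W x y \<longleftrightarrow> x \<in> W \<and> y \<in> W \<and> (\<exists>e\<in>E. ends e = {x, y})"

definition connected_on :: "'e set \<Rightarrow> ('e \<Rightarrow> 'v set) \<Rightarrow> 'v set \<Rightarrow> bool" where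
  "connected_on E ends W \<longleftrightarrow> W \<noteq> {} \<and>
     (\<forall>x\<in>W. \<forall>y\<in>W. (adj_in E ends W)\<^sup>*\<^sup>* x y)"

definition cut_vertex :: "'v set \<Rightarrow> 'e set \<Rightarrow> ('e \<Rightarrow> 'v set) \<Rightarrow> 'v \<Rightarrow> bool" where
  "cut_vertex V E ends v \<longleftrightarrow> v \<in> V \<and> V - {v} \<noteq> {} \<and> \<not> connected_on E ends (V - {v})"

definition two_connected :: "'v set \<Rightarrow> 'e set \<Rightarrow> ('e \<Rightarrow> 'v set) \<Rightarrow> bool" where
  "two_connected V E ends \<longleftrightarrow> connected_on E ends V \<and> (\<forall>v\<in>V. \<not> cut_vertex V E ends v)"

datatype gvert = U1 | U2 | Vx nat   (* Vx i = v_i, 1 \<le> i \<le> 2k *)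

datatype gedge =
    A nat        (* A i : the half of e_i from u_1 to v_i *)
  | B nat        (* B i : the half of e_i from v_i to u_2 *)
  | P nat nat    (* P i j : j-th parallel edge between v_i and v_(i+1), i odd, j < 2k-2 *)

definition Gk_V :: "nat \<Rightarrow> gvert set" where
  "Gk_V k = {U1, U2} \<union> Vx ` {1..2*k}"

definition Gk_E :: "nat \<Rightarrow> gedge set" where
  "Gk_E k = A ` {1..2*k} \<union> B ` {1..2*k} \<union>
     {P i j | i j. i \<in> {1..2*k-1} \<and> odd i \<and> j < 2*k-2}"

fun Gk_ends :: "gedge \<Rightarrow> gvert set" where
  "Gk_ends (A i) = {U1, Vx i}"
| "Gk_ends (B i) = {Vx i, U2}"
| "Gk_ends (P i j) = {Vx i, Vx (i+1)}"

definition Gk_O :: "nat \<Rightarrow> gedge set set" where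
  "Gk_O k = {{A i, B i, B (i+1), A (i+1)} | i. i \<in> {1..2*k-1} \<and> odd i}"

end

theory Submission
  imports Defs
begin

text \<open>The structural claims are checked directly: u_1 and u_2 each see every v_i, and
deleting one vertex leaves a hub (u_1, or u_2 if u_1 was deleted) adjacent to or two steps
from every remaining vertex. For the bound, v_i and v_(i+1) (i odd) are joined by the same
2k-2 parallel edges, so a t-factor F contains the same number of edges of {u_1v_i, v_iu_2}
as of {u_1v_(i+1), v_(i+1)u_2}. As F meets the 4-cycle u_1v_iu_2v_(i+1)u_1, both numbers are
positive. Hence F contains at least 2k edges at u_1 or u_2, while it has exactly 2t of them.\<close>

lemma symp_adj_in: "symp (adj_in E ends W)"
  by (auto intro!: sympI simp: adj_in_def insert_commute)

lemma connected_onI_hub: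
  assumes "h \<in> W" and "\<And>x. x \<in> W \<Longrightarrow> (adj_in E ends W)\<^sup>*\<^sup>* h x"
  shows "connected_on E ends W"
  unfolding connected_on_def
proof (intro conjI ballI)
  show "W \<noteq> {}" using assms(1) by auto
  fix x y assume "x \<in> W" "y \<in> W"
  have "(adj_in E ends W)\<^sup>*\<^sup>* x h"
    using sympD[OF symp_rtranclp[OF symp_adj_in] assms(2)[OF \<open>x \<in> W\<close>]] .
  then show "(adj_in E ends W)\<^sup>*\<^sup>* x y" using assms(2)[OF \<open>y \<in> W\<close>] by simp
qed

lemma A_in_Gk_E: "A i \<in> Gk_E k \<longleftrightarrow> i \<in> {1..2*k}"
  by (auto simp: Gk_E_def)

lemma B_in_Gk_E: "B i \<in> Gk_E k \<longleftrightarrow> i \<in> {1..2*k}"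
  by (auto simp: Gk_E_def)

lemma P_in_Gk_E: "P i m \<in> Gk_E k \<longleftrightarrow> i \<in> {1..2*k-1} \<and> odd i \<and> m < 2*k-2"
  by (auto simp: Gk_E_def)

lemmas Gk_E_iffs = A_in_Gk_E B_in_Gk_E P_in_Gk_E

lemma finite_Gk_E: "finite (Gk_E k)"
proof -
  have "{P i j | i j. i \<in> {1..2*k-1} \<and> odd i \<and> j < 2*k-2}
          \<subseteq> case_prod P ` ({1..2*k-1} \<times> {..<2*k-2})"
    by auto
  then have "finite {P i j | i j. i \<in> {1..2*k-1} \<and> odd i \<and> j < 2*k-2}"
    by (rule finite_subset) simp
  then show ?thesis
    unfolding Gk_E_def by simp
qed

lemma U1_in_Gk_ends_iff: "e \<in> Gk_E k \<Longrightarrow> U1 \<in> Gk_ends e \<longleftrightarrow> e \<in> A ` {1..2*k}"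
  by (cases e) (auto simp: A_in_Gk_E)

lemma U2_in_Gk_ends_iff: "e \<in> Gk_E k \<Longrightarrow> U2 \<in> Gk_ends e \<longleftrightarrow> e \<in> B ` {1..2*k}"
  by (cases e) (auto simp: B_in_Gk_E)

lemma Vx_in_Gk_ends_iff:
  assumes "odd j" "i = j \<or> i = j + 1" "e \<in> Gk_E k"
  shows "Vx i \<in> Gk_ends e \<longleftrightarrow> e \<in> {A i, B i} \<union> range (P j)"
  using assms by (cases e) (auto simp: P_in_Gk_E)

lemma Gk_index_cases:
  fixes i :: nat
  assumes "i \<in> {1..2*k}"
  obtains j where "odd j" "j \<in> {1..2*k-1}" "i = j \<or> i = j + 1"
proof (cases "odd i")
  case True
  then have "i \<noteq> 2*k" by auto
  then show ?thesis using True assms that[of i] by auto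
next
  case False
  then have "odd (i - 1)" "i - 1 \<in> {1..2*k-1}" "i = i - 1 + 1"
    using assms by (auto elim: oddE)
  then show ?thesis using that by blast
qed

lemma multigraph_Gk: "multigraph (Gk_V k) (Gk_E k) Gk_ends"
  unfolding multigraph_def
proof (intro conjI ballI)
  show "finite (Gk_V k)" by (simp add: Gk_V_def)
  show "finite (Gk_E k)" by (rule finite_Gk_E)
  fix e assume "e \<in> Gk_E k"
  then show "Gk_ends e \<subseteq> Gk_V k" "card (Gk_ends e) = 2"
    by (cases e; auto simp: Gk_V_def Gk_E_iffs)+
qed

lemma adj_in_Gk_U1_Vx:
  "i \<in> {1..2*k} \<Longrightarrow> U1 \<in> W \<Longrightarrow> Vx i \<in> W \<Longrightarrow> adj_in (Gk_E k) Gk_ends W U1 (Vx i)"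
  unfolding adj_in_def by (auto intro!: bexI[of _ "A i"] simp: A_in_Gk_E)

lemma adj_in_Gk_U2_Vx:
  "i \<in> {1..2*k} \<Longrightarrow> U2 \<in> W \<Longrightarrow> Vx i \<in> W \<Longrightarrow> adj_in (Gk_E k) Gk_ends W U2 (Vx i)"
  unfolding adj_in_def by (auto intro!: bexI[of _ "B i"] simp: B_in_Gk_E insert_commute)

lemma rtranclp_adj_in_Gk_U1_U2:
  assumes "i \<in> {1..2*k}" "U1 \<in> W" "U2 \<in> W" "Vx i \<in> W"
  shows "(adj_in (Gk_E k) Gk_ends W)\<^sup>*\<^sup>* U1 U2"
  using adj_in_Gk_U1_Vx[OF assms(1,2,4)] sympD[OF symp_adj_in adj_in_Gk_U2_Vx[OF assms(1,3,4)]]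
  by (meson rtranclp.rtrancl_into_rtrancl rtranclp.rtrancl_refl)

lemma two_connected_Gk:
  assumes "k \<ge> 1"
  shows "two_connected (Gk_V k) (Gk_E k) Gk_ends"
  unfolding two_connected_def
proof (intro conjI ballI)
  show "connected_on (Gk_E k) Gk_ends (Gk_V k)"
  proof (rule connected_onI_hub[of U1])
    fix x assume "x \<in> Gk_V k"
    moreover have "(adj_in (Gk_E k) Gk_ends (Gk_V k))\<^sup>*\<^sup>* U1 U2"
      by (rule rtranclp_adj_in_Gk_U1_U2[of 1]) (use assms in \<open>auto simp: Gk_V_def\<close>)
    moreover have "(adj_in (Gk_E k) Gk_ends (Gk_V k))\<^sup>*\<^sup>* U1 (Vx i)" if "i \<in> {1..2*k}" for i
      by (intro r_into_rtranclp adj_in_Gk_U1_Vx that) (use that in \<open>auto simp: Gk_V_def\<close>)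
    ultimately show "(adj_in (Gk_E k) Gk_ends (Gk_V k))\<^sup>*\<^sup>* U1 x"
      unfolding Gk_V_def by auto
  qed (simp add: Gk_V_def)
  fix v assume "v \<in> Gk_V k"
  let ?W = "Gk_V k - {v}"
  have "connected_on (Gk_E k) Gk_ends ?W"
  proof (cases "v = U1")
    case True
    show ?thesis
    proof (rule connected_onI_hub[of U2])
      fix x assume "x \<in> ?W"
      moreover have "(adj_in (Gk_E k) Gk_ends ?W)\<^sup>*\<^sup>* U2 (Vx i)" if "i \<in> {1..2*k}" for i
        by (intro r_into_rtranclp adj_in_Gk_U2_Vx that) (use that True in \<open>auto simp: Gk_V_def\<close>)
      ultimately show "(adj_in (Gk_E k) Gk_ends ?W)\<^sup>*\<^sup>* U2 x"
        using True unfolding Gk_V_def by auto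
    qed (use True in \<open>simp add: Gk_V_def\<close>)
  next
    case False
    show ?thesis
    proof (rule connected_onI_hub[of U1])
      fix x assume "x \<in> ?W"
      moreover have "(adj_in (Gk_E k) Gk_ends ?W)\<^sup>*\<^sup>* U1 (Vx i)"
        if "i \<in> {1..2*k}" "Vx i \<noteq> v" for i
        by (intro r_into_rtranclp adj_in_Gk_U1_Vx that) (use that False in \<open>auto simp: Gk_V_def\<close>)
      moreover have "(adj_in (Gk_E k) Gk_ends ?W)\<^sup>*\<^sup>* U1 U2" if "v \<noteq> U2"
        \<comment> \<open>route through v_1, or through v_2 if v = v_1\<close>
        using rtranclp_adj_in_Gk_U1_U2[of 1 k ?W] rtranclp_adj_in_Gk_U1_U2[of 2 k ?W]
          assms that False by (cases "v = Vx 1") (auto simp: Gk_V_def)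
      ultimately show "(adj_in (Gk_E k) Gk_ends ?W)\<^sup>*\<^sup>* U1 x"
        unfolding Gk_V_def by auto
    qed (use False in \<open>simp add: Gk_V_def\<close>)
  qed
  then show "\<not> cut_vertex (Gk_V k) (Gk_E k) Gk_ends v"
    unfolding cut_vertex_def by auto
qed

lemma card_pair_Un_parallel: "card ({A i, B i} \<union> P j ` {..<n}) = n + 2"
proof -
  have "card (P j ` {..<n}) = n" by (simp add: card_image inj_on_def)
  then show ?thesis by (subst card_Un_disjoint) auto
qed

lemma regular_Gk: "regular (Gk_V k) (Gk_E k) Gk_ends (2*k)"
  unfolding regular_def mdegree_def
proof
  fix v assume v: "v \<in> Gk_V k"
  show "card {e \<in> Gk_E k. v \<in> Gk_ends e} = 2*k"
  proof (cases v)
    case U1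
    then have "{e \<in> Gk_E k. v \<in> Gk_ends e} = A ` {1..2*k}"
      by (auto simp: U1_in_Gk_ends_iff A_in_Gk_E)
    then show ?thesis by (simp add: card_image inj_on_def)
  next
    case U2
    then have "{e \<in> Gk_E k. v \<in> Gk_ends e} = B ` {1..2*k}"
      by (auto simp: U2_in_Gk_ends_iff B_in_Gk_E)
    then show ?thesis by (simp add: card_image inj_on_def)
  next
    case (Vx i)
    with v have "i \<in> {1..2*k}" by (auto simp: Gk_V_def)
    then obtain j where j: "odd j" "j \<in> {1..2*k-1}" "i = j \<or> i = j + 1"
      by (rule Gk_index_cases)
    have "{e \<in> Gk_E k. v \<in> Gk_ends e} = {A i, B i} \<union> P j ` {..<2*k-2}"
      using Vx j Vx_in_Gk_ends_iff[OF j(1,3)] by (auto simp: Gk_E_iffs)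
    moreover have "2*k - 2 + 2 = 2*k" using j(2) by auto
    ultimately show ?thesis using card_pair_Un_parallel[of i j "2*k-2"] by simp
  qed
qed

lemma mdegree_Vx_subgraph_Gk:
  assumes "F \<subseteq> Gk_E k" "odd j" "i = j \<or> i = j + 1"
  shows "mdegree F Gk_ends (Vx i) = card (F \<inter> {A i, B i}) + card (F \<inter> range (P j))"
proof -
  have "{e \<in> F. Vx i \<in> Gk_ends e} = (F \<inter> {A i, B i}) \<union> (F \<inter> range (P j))"
    using assms Vx_in_Gk_ends_iff[OF assms(2,3)] by blast
  moreover have "finite F" using assms(1) finite_Gk_E by (rule finite_subset)
  ultimately show ?thesis
    unfolding mdegree_def by (subst card_Un_disjoint[symmetric]) auto
qed

lemma cycle_in_Gk_O: "odd j \<Longrightarrow> j \<in> {1..2*k-1} \<Longrightarrow> {A j, B j, B (j+1), A (j+1)} \<in> Gk_O k"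
  unfolding Gk_O_def by blast

lemma factor_Gk_meeting_O_meets_subdivided_edge:
  assumes F: "is_factor (Gk_V k) (Gk_E k) Gk_ends t F" and O: "\<forall>C\<in>Gk_O k. F \<inter> C \<noteq> {}"
    and i: "i \<in> {1..2*k}"
  shows "F \<inter> {A i, B i} \<noteq> {}"
proof -
  obtain j where j: "odd j" "j \<in> {1..2*k-1}" "i = j \<or> i = j + 1"
    using i by (rule Gk_index_cases)
  have FE: "F \<subseteq> Gk_E k" and deg: "\<And>v. v \<in> Gk_V k \<Longrightarrow> mdegree F Gk_ends v = t"
    using F unfolding is_factor_def regular_def by auto
  have in_V: "Vx j \<in> Gk_V k" "Vx (j+1) \<in> Gk_V k"
    using j(2) by (auto simp: Gk_V_def)
  have "card (F \<inter> {A j, B j}) + card (F \<inter> range (P j)) = t"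
    using deg[OF in_V(1)] mdegree_Vx_subgraph_Gk[OF FE j(1), of j] by simp
  moreover have "card (F \<inter> {A (j+1), B (j+1)}) + card (F \<inter> range (P j)) = t"
    using deg[OF in_V(2)] mdegree_Vx_subgraph_Gk[OF FE j(1), of "j+1"] by simp
  ultimately have "card (F \<inter> {A j, B j}) > 0 \<longleftrightarrow> card (F \<inter> {A (j+1), B (j+1)}) > 0"
    by linarith
  then have "F \<inter> {A j, B j} \<noteq> {} \<longleftrightarrow> F \<inter> {A (j+1), B (j+1)} \<noteq> {}"
    by (simp add: card_gt_0_iff)
  moreover have "F \<inter> {A j, B j, B (j+1), A (j+1)} \<noteq> {}"
    using O cycle_in_Gk_O[OF j(1,2)] by blast
  ultimately show ?thesis
    using j(3) by blast
qed

lemma factor_Gk_meeting_O_degree_ge: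
  assumes F: "is_factor (Gk_V k) (Gk_E k) Gk_ends t F" and O: "\<forall>C\<in>Gk_O k. F \<inter> C \<noteq> {}"
  shows "k \<le> t"
proof -
  define S where "S = {1..2*k}"
  have FE: "F \<subseteq> Gk_E k" and deg: "\<And>v. v \<in> Gk_V k \<Longrightarrow> mdegree F Gk_ends v = t"
    using F unfolding is_factor_def regular_def by auto
  have finF: "finite F" using FE finite_Gk_E by (rule finite_subset)
  have "{e \<in> F. U1 \<in> Gk_ends e} = F \<inter> A ` S" "{e \<in> F. U2 \<in> Gk_ends e} = F \<inter> B ` S"
    using FE by (auto simp: S_def U1_in_Gk_ends_iff U2_in_Gk_ends_iff)
  then have "2 * t = card (F \<inter> A ` S) + card (F \<inter> B ` S)"
    using deg[of U1] deg[of U2] by (simp add: Gk_V_def mdegree_def)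
  also have "\<dots> = card (F \<inter> (A ` S \<union> B ` S))"
    unfolding Int_Un_distrib by (rule card_Un_disjoint[symmetric]) (use finF in auto)
  finally have card_X: "card (F \<inter> (A ` S \<union> B ` S)) = 2 * t" ..
  have "\<forall>i\<in>S. \<exists>e. e \<in> F \<inter> {A i, B i}"
    using factor_Gk_meeting_O_meets_subdivided_edge[OF F O] unfolding S_def by blast
  then obtain f where f: "\<And>i. i \<in> S \<Longrightarrow> f i \<in> F \<inter> {A i, B i}"
    by (metis bchoice)
  have "inj_on f S"
  proof (rule inj_onI)
    fix x y assume "x \<in> S" "y \<in> S" "f x = f y"
    with f[of x] f[of y] show "x = y" by auto
  qed
  moreover have "f ` S \<subseteq> F \<inter> (A ` S \<union> B ` S)"
    using f by auto
  ultimately have "card S \<le> card (F \<inter> (A ` S \<union> B ` S))"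
    using finF by (intro card_inj_on_le) auto
  then show ?thesis
    using card_X by (simp add: S_def)
qed

theorem mainTheorem15:
  fixes k :: nat
  assumes "k \<ge> 2"
  shows "multigraph (Gk_V k) (Gk_E k) Gk_ends
       \<and> two_connected (Gk_V k) (Gk_E k) Gk_ends
       \<and> regular (Gk_V k) (Gk_E k) Gk_ends (2*k)
       \<and> (\<forall>t F. t \<ge> 1 \<and> is_factor (Gk_V k) (Gk_E k) Gk_ends t F
              \<and> (\<forall>C\<in>Gk_O k. F \<inter> C \<noteq> {}) \<longrightarrow> t \<ge> k)"
proof (intro conjI allI impI)
  from assms have "k \<ge> 1" by simp
  show "multigraph (Gk_V k) (Gk_E k) Gk_ends" by (rule multigraph_Gk)
  show "two_connected (Gk_V k) (Gk_E k) Gk_ends" using \<open>k \<ge> 1\<close> by (rule two_connected_Gk)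
  show "regular (Gk_V k) (Gk_E k) Gk_ends (2*k)" by (rule regular_Gk)
  fix t F
  assume "t \<ge> 1 \<and> is_factor (Gk_V k) (Gk_E k) Gk_ends t F \<and> (\<forall>C\<in>Gk_O k. F \<inter> C \<noteq> {})"
  then show "t \<ge> k" using factor_Gk_meeting_O_degree_ge by blast
qed

end
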